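(* Let $x\sim P_X$, where $P_X$ satisfies (A2). Let $u:\mathbb R^d\to\mathbb R^{d_u}$ and $v:\mathbb R^d\to\mathbb R^{d_v}$ be Lipschitz functions with $\mathbb E_x[u(x)]=0$, $\mathbb E_x[v(x)]=0$, $\|u\|_{\mathrm{Lip}}=c_1$, $\|v\|_{\mathrm{Lip}}=c_2$. Let $U$ be a $d_u\times d_v$ matrix and $$\Gamma(x)=u(x)^\top Uv(x)-\mathbb E_x[u(x)^\top Uv(x)].$$ Then $\|\Gamma\|_{\psi_1}<CK^2\|U\|_F$, where $K=\sqrt{c_1^2+c_2^2}$ and $C$ is a numerical constant.
   Context: (A2) Lipschitz concentration: there is an absolute constant $c>0$ such that for every Lipschitz $\varphi:\mathbb R^d\to\mathbb R$, $\mathbb E|\varphi(x)|<\infty$ and $\mathbb P(|\varphi(x)-\mathbb E\varphi(x)|>t)\le 2e^{-ct^2/\|\varphi\|_{\mathrm{Lip}}^2}$ for all $t>0$. For a real random variable $X$, $\|X\|_{\psi_1}=\inf\{t>0:\mathbb E\exp(|X|/t)\le2\}$. *)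

theory Defs
  imports "HOL-Probability.Probability"
begin

text \<open>Vectors in R^n are represented as functions nat => real; only the
coordinates i < n matter. The carrier of R^n is the extensional function space.\<close>

definition Rn :: "nat \<Rightarrow> (nat \<Rightarrow> real) set" where
  "Rn n = PiE {..<n} (\<lambda>_. UNIV)"

definition enorm :: "nat \<Rightarrow> (nat \<Rightarrow> real) \<Rightarrow> real" where
  "enorm n x = sqrt (\<Sum>i<n. (x i)\<^sup>2)"

definition lip_consts :: "nat \<Rightarrow> nat \<Rightarrow> ((nat \<Rightarrow> real) \<Rightarrow> nat \<Rightarrow> real) \<Rightarrow> real set" where
  "lip_consts n m f = {L. 0 \<le> L \<and> (\<forall>x\<in>Rn n. \<forall>y\<in>Rn n.
      enorm m (\<lambda>i. f x i - f y i) \<le> L * enorm n (\<lambda>i. x i - y i))}"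

definition is_lip :: "nat \<Rightarrow> nat \<Rightarrow> ((nat \<Rightarrow> real) \<Rightarrow> nat \<Rightarrow> real) \<Rightarrow> bool" where
  "is_lip n m f \<longleftrightarrow> lip_consts n m f \<noteq> {}"

definition lipnorm :: "nat \<Rightarrow> nat \<Rightarrow> ((nat \<Rightarrow> real) \<Rightarrow> nat \<Rightarrow> real) \<Rightarrow> real" where
  "lipnorm n m f = Inf (lip_consts n m f)"

text \<open>Assumption (A2) with constant c for a law M on R^d.\<close>
definition lip_concentration :: "real \<Rightarrow> nat \<Rightarrow> (nat \<Rightarrow> real) measure \<Rightarrow> bool" where
  "lip_concentration c d M \<longleftrightarrow>
    (\<forall>\<phi> :: (nat \<Rightarrow> real) \<Rightarrow> real. is_lip d 1 (\<lambda>x i. \<phi> x) \<longrightarrow>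
       integrable M \<phi> \<and>
       (\<forall>t>0. measure M {x \<in> space M. \<bar>\<phi> x - (\<integral>y. \<phi> y \<partial>M)\<bar> > t}
               \<le> 2 * exp (- c * t\<^sup>2 / (lipnorm d 1 (\<lambda>x i. \<phi> x))\<^sup>2)))"

text \<open>Orlicz psi_1 norm, valued in extended reals (infinity if no t works).\<close>
definition psi1_norm :: "'a measure \<Rightarrow> ('a \<Rightarrow> real) \<Rightarrow> ereal" where
  "psi1_norm M X = Inf {ereal t | t. t > 0 \<and>
      (\<integral>\<^sup>+ x. ennreal (exp (\<bar>X x\<bar> / t)) \<partial>M) \<le> 2}"

definition frob :: "nat \<Rightarrow> nat \<Rightarrow> (nat \<Rightarrow> nat \<Rightarrow> real) \<Rightarrow> real" where
  "frob m n U = sqrt (\<Sum>i<m. \<Sum>j<n. (U i j)\<^sup>2)"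

definition bilin :: "nat \<Rightarrow> nat \<Rightarrow> (nat \<Rightarrow> nat \<Rightarrow> real) \<Rightarrow> (nat \<Rightarrow> real) \<Rightarrow> (nat \<Rightarrow> real) \<Rightarrow> real" where
  "bilin m n U a b = (\<Sum>i<m. \<Sum>j<n. a i * U i j * b j)"

end

theory Submission
  imports Defs
begin

(*
  Put f x = u(x)^T U v(x). The identity
    f x - f y = (u x - u y)^T (U v x) + (U^T u y)^T (v x - v y)
  makes f locally Lipschitz, |f x - f y| <= |x - y| (G x + G y), with the gauge
  G = c1 |U v| + c2 |U^T u|. The gauge is 2b-Lipschitz for b = c1 c2 |U|_F, and since the
  coordinates of U v and U^T u are centred Lipschitz functions, (A2) bounds their second moments
  and hence E G <= mu b. On the sublevel set {G <= a} the function f is 2a-Lipschitz; its McShane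
  extension F_a concentrates around its mean, and the means of the F_a (a >= a0) stay within
  O(a) of each other, because the events where G is large or where F_a deviates have total
  probability below one. Splitting at a = sqrt sigma * b gives
    P(|f - m| > sigma b) <= 4 exp(-c sigma / 16),
  a sub-exponential tail, and summing over geometric layers bounds the psi_1 norm of f - E f
  by a constant times b <= K^2 |U|_F.

  Every constant depends on c only; the intermediate results therefore obtain their constant
  before quantifying over the measure.
*)

lemma enorm_eq_L2_set: "enorm n x = L2_set x {..<n}"
  by (simp add: enorm_def L2_set_def)

lemma enorm_nonneg: "0 \<le> enorm n x"
  by (simp add: enorm_eq_L2_set)

lemma enorm_power2: "(enorm n x)\<^sup>2 = (\<Sum>i<n. (x i)\<^sup>2)"
  by (simp add: enorm_def sum_nonneg)

lemma enorm_add_le: "enorm n (\<lambda>i. x i + y i) \<le> enorm n x + enorm n y"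
  unfolding enorm_eq_L2_set by (rule L2_set_triangle_ineq)

lemma abs_enorm_diff_le: "\<bar>enorm n x - enorm n y\<bar> \<le> enorm n (\<lambda>i. x i - y i)"
proof -
  have "enorm n x \<le> enorm n (\<lambda>i. x i - y i) + enorm n y"
    using enorm_add_le[of n "\<lambda>i. x i - y i" y] by simp
  moreover have "enorm n y \<le> enorm n (\<lambda>i. x i - y i) + enorm n x"
    using enorm_add_le[of n "\<lambda>i. x i - y i" "\<lambda>i. - x i"]
    by (simp add: enorm_def power2_commute)
  ultimately show ?thesis by linarith
qed

lemma abs_le_enorm:
  assumes "i < n"
  shows "\<bar>x i\<bar> \<le> enorm n x"
proof -
  have "sqrt ((x i)\<^sup>2) \<le> sqrt (\<Sum>k<n. (x k)\<^sup>2)"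
    using assms by (intro real_sqrt_le_mono member_le_sum) auto
  then show ?thesis by (simp add: enorm_def)
qed

lemma abs_sum_mult_le_enorm: "\<bar>\<Sum>i<n. x i * y i\<bar> \<le> enorm n x * enorm n y"
proof -
  have "\<bar>\<Sum>i<n. x i * y i\<bar> \<le> (\<Sum>i<n. \<bar>x i\<bar> * \<bar>y i\<bar>)"
    by (rule order_trans[OF sum_abs]) (simp add: abs_mult)
  also have "\<dots> \<le> enorm n x * enorm n y"
    unfolding enorm_eq_L2_set by (rule L2_set_mult_ineq)
  finally show ?thesis .
qed

definition dist_Rn :: "nat \<Rightarrow> (nat \<Rightarrow> real) \<Rightarrow> (nat \<Rightarrow> real) \<Rightarrow> real" where
  "dist_Rn n x y = enorm n (\<lambda>i. x i - y i)"

lemma dist_Rn_nonneg: "0 \<le> dist_Rn n x y"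
  by (simp add: dist_Rn_def enorm_nonneg)

lemma dist_Rn_self: "dist_Rn n x x = 0"
  by (simp add: dist_Rn_def enorm_def)

lemma dist_Rn_commute: "dist_Rn n x y = dist_Rn n y x"
  by (simp add: dist_Rn_def enorm_def power2_commute)

lemma dist_Rn_triangle: "dist_Rn n x z \<le> dist_Rn n x y + dist_Rn n y z"
  using enorm_add_le[of n "\<lambda>i. x i - y i" "\<lambda>i. y i - z i"] by (simp add: dist_Rn_def)

definition lipschitz_Rn :: "nat \<Rightarrow> real \<Rightarrow> ((nat \<Rightarrow> real) \<Rightarrow> real) \<Rightarrow> bool" where
  "lipschitz_Rn n L \<phi> \<longleftrightarrow> 0 \<le> L \<and> (\<forall>x\<in>Rn n. \<forall>y\<in>Rn n. \<bar>\<phi> x - \<phi> y\<bar> \<le> L * dist_Rn n x y)"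

lemma lipschitz_RnD: "lipschitz_Rn n L \<phi> \<Longrightarrow> x \<in> Rn n \<Longrightarrow> y \<in> Rn n \<Longrightarrow> \<bar>\<phi> x - \<phi> y\<bar> \<le> L * dist_Rn n x y"
  by (simp add: lipschitz_Rn_def)

lemma lipschitz_Rn_nonneg: "lipschitz_Rn n L \<phi> \<Longrightarrow> 0 \<le> L"
  by (simp add: lipschitz_Rn_def)

lemma lipschitz_Rn_mono: "lipschitz_Rn n L \<phi> \<Longrightarrow> L \<le> L' \<Longrightarrow> lipschitz_Rn n L' \<phi>"
  unfolding lipschitz_Rn_def by (meson dist_Rn_nonneg mult_right_mono order_trans)

lemma lip_consts_nonneg: "L \<in> lip_consts n m f \<Longrightarrow> 0 \<le> L"
  by (simp add: lip_consts_def)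

lemma lip_consts_dist_le:
  "L \<in> lip_consts n m f \<Longrightarrow> x \<in> Rn n \<Longrightarrow> y \<in> Rn n \<Longrightarrow> enorm m (\<lambda>i. f x i - f y i) \<le> L * dist_Rn n x y"
  by (simp add: lip_consts_def dist_Rn_def)

lemma lip_consts_one_iff: "L \<in> lip_consts n 1 (\<lambda>x i. \<phi> x) \<longleftrightarrow> lipschitz_Rn n L \<phi>"
  by (simp add: lip_consts_def lipschitz_Rn_def enorm_def dist_Rn_def)

lemma lipschitz_Rn_coordinate: "L \<in> lip_consts n m f \<Longrightarrow> i < m \<Longrightarrow> lipschitz_Rn n L (\<lambda>x. f x i)"
  unfolding lipschitz_Rn_def
  using lip_consts_nonneg lip_consts_dist_le abs_le_enorm order_trans by blast

lemma lipnorm_in_lip_consts: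
  assumes "is_lip n m f"
  shows "lipnorm n m f \<in> lip_consts n m f"
proof -
  have ne: "lip_consts n m f \<noteq> {}" using assms by (simp add: is_lip_def)
  have "enorm m (\<lambda>i. f x i - f y i) \<le> lipnorm n m f * dist_Rn n x y" if "x \<in> Rn n" "y \<in> Rn n" for x y
  proof (cases "dist_Rn n x y = 0")
    case True
    then show ?thesis
      using ne lip_consts_dist_le[OF _ that] by (metis all_not_in_conv mult_zero_right)
  next
    case False
    then have pos: "0 < dist_Rn n x y" using dist_Rn_nonneg[of n x y] by linarith
    have "enorm m (\<lambda>i. f x i - f y i) / dist_Rn n x y \<le> lipnorm n m f"
      unfolding lipnorm_def using ne lip_consts_dist_le[OF _ that] pos
      by (intro cInf_greatest) (auto simp: pos_divide_le_eq)
    then show ?thesis using pos by (simp add: pos_divide_le_eq)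
  qed
  moreover have "0 \<le> lipnorm n m f"
    unfolding lipnorm_def using ne by (intro cInf_greatest) (auto simp: lip_consts_def)
  ultimately show ?thesis by (simp add: lip_consts_def dist_Rn_def)
qed

lemma lipnorm_nonneg: "is_lip n m f \<Longrightarrow> 0 \<le> lipnorm n m f"
  by (rule lip_consts_nonneg[OF lipnorm_in_lip_consts])

lemma lipnorm_le: "L \<in> lip_consts n m f \<Longrightarrow> lipnorm n m f \<le> L"
  unfolding lipnorm_def lip_consts_def by (intro cInf_lower bdd_belowI[of _ 0]) auto

section \<open>McShane extension\<close>

definition mcshane_ext ::
    "nat \<Rightarrow> real \<Rightarrow> ((nat \<Rightarrow> real) \<Rightarrow> real) \<Rightarrow> (nat \<Rightarrow> real) set \<Rightarrow> (nat \<Rightarrow> real) \<Rightarrow> real" where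
  "mcshane_ext n L f A x = Inf ((\<lambda>y. f y + L * dist_Rn n x y) ` A)"

context
  fixes n :: nat and L :: real and f :: "(nat \<Rightarrow> real) \<Rightarrow> real" and A :: "(nat \<Rightarrow> real) set"
  assumes nonempty: "A \<noteq> {}" and L_nonneg: "0 \<le> L"
    and lipschitz_on: "\<And>x y. x \<in> A \<Longrightarrow> y \<in> A \<Longrightarrow> \<bar>f x - f y\<bar> \<le> L * dist_Rn n x y"
begin

private lemma mcshane_ext_le: "y \<in> A \<Longrightarrow> mcshane_ext n L f A x \<le> f y + L * dist_Rn n x y"
proof -
  assume y: "y \<in> A"
  obtain a where a: "a \<in> A" using nonempty by blast
  have "f a - L * dist_Rn n x a \<le> f z + L * dist_Rn n x z" if "z \<in> A" for z
  proof -
    have "dist_Rn n a z \<le> dist_Rn n x a + dist_Rn n x z"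
      using dist_Rn_triangle[of n a z x] dist_Rn_commute[of n a x] by linarith
    then have "f a - f z \<le> L * (dist_Rn n x a + dist_Rn n x z)"
      using lipschitz_on[OF a that] L_nonneg by (smt (verit) mult_left_mono)
    then show ?thesis by (simp add: algebra_simps)
  qed
  then show ?thesis
    unfolding mcshane_ext_def using y by (intro cInf_lower bdd_belowI2) auto
qed

private lemma le_mcshane_ext: "(\<And>y. y \<in> A \<Longrightarrow> a \<le> f y + L * dist_Rn n x y) \<Longrightarrow> a \<le> mcshane_ext n L f A x"
  unfolding mcshane_ext_def using nonempty by (intro cInf_greatest) auto

lemma mcshane_ext_eq: "x \<in> A \<Longrightarrow> mcshane_ext n L f A x = f x"
proof (intro antisym)
  assume x: "x \<in> A"
  show "mcshane_ext n L f A x \<le> f x" using mcshane_ext_le[OF x, of x] by (simp add: dist_Rn_self)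
  show "f x \<le> mcshane_ext n L f A x"
    using lipschitz_on[OF x] by (intro le_mcshane_ext) (auto simp: abs_le_iff algebra_simps)
qed

lemma lipschitz_mcshane_ext: "lipschitz_Rn n L (mcshane_ext n L f A)"
proof -
  have one_sided: "mcshane_ext n L f A x \<le> mcshane_ext n L f A z + L * dist_Rn n x z" for x z
  proof -
    have "mcshane_ext n L f A x - L * dist_Rn n x z \<le> mcshane_ext n L f A z"
    proof (rule le_mcshane_ext)
      fix y assume "y \<in> A"
      then have "mcshane_ext n L f A x \<le> f y + L * dist_Rn n x y" by (rule mcshane_ext_le)
      also have "\<dots> \<le> f y + L * (dist_Rn n x z + dist_Rn n z y)"
        using dist_Rn_triangle L_nonneg by (simp add: mult_left_mono)
      finally show "mcshane_ext n L f A x - L * dist_Rn n x z \<le> f y + L * dist_Rn n z y"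
        by (simp add: algebra_simps)
    qed
    then show ?thesis by simp
  qed
  have "\<bar>mcshane_ext n L f A x - mcshane_ext n L f A z\<bar> \<le> L * dist_Rn n x z" for x z
    using one_sided[of x z] one_sided[of z x] dist_Rn_commute[of n z x] by (simp add: abs_le_iff)
  then show ?thesis unfolding lipschitz_Rn_def using L_nonneg by blast
qed

end

definition mat_vec :: "nat \<Rightarrow> (nat \<Rightarrow> nat \<Rightarrow> real) \<Rightarrow> (nat \<Rightarrow> real) \<Rightarrow> nat \<Rightarrow> real" where
  "mat_vec n U w i = (\<Sum>j<n. U i j * w j)"

definition transpose_mat :: "(nat \<Rightarrow> nat \<Rightarrow> real) \<Rightarrow> nat \<Rightarrow> nat \<Rightarrow> real" where
  "transpose_mat U j i = U i j"

lemma frob_nonneg: "0 \<le> frob m n U"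
  by (simp add: frob_def sum_nonneg)

lemma frob_transpose_mat: "frob n m (transpose_mat U) = frob m n U"
  unfolding frob_def transpose_mat_def by (subst sum.swap) simp

lemma frob_power2_eq_sum_rows: "(frob m n U)\<^sup>2 = (\<Sum>i<m. (enorm n (U i))\<^sup>2)"
  by (simp add: enorm_def frob_def sum_nonneg)

lemma enorm_mat_vec_le: "enorm m (mat_vec n U w) \<le> frob m n U * enorm n w"
proof -
  have "(\<Sum>i<m. (mat_vec n U w i)\<^sup>2) \<le> (\<Sum>i<m. (\<Sum>j<n. (U i j)\<^sup>2) * (\<Sum>j<n. (w j)\<^sup>2))"
    unfolding mat_vec_def by (intro sum_mono Cauchy_Schwarz_ineq_sum)
  then have "sqrt (\<Sum>i<m. (mat_vec n U w i)\<^sup>2) \<le> sqrt ((\<Sum>i<m. \<Sum>j<n. (U i j)\<^sup>2) * (\<Sum>j<n. (w j)\<^sup>2))"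
    by (simp add: real_sqrt_le_mono sum_distrib_right)
  then show ?thesis by (simp add: enorm_def frob_def real_sqrt_mult)
qed

lemma mat_vec_diff: "mat_vec n U x i - mat_vec n U y i = mat_vec n U (\<lambda>j. x j - y j) i"
  by (simp add: mat_vec_def sum_subtractf[symmetric] algebra_simps)

lemma bilin_diff:
  "bilin m n U a b - bilin m n U a' b' =
     (\<Sum>i<m. (a i - a' i) * mat_vec n U b i) + (\<Sum>j<n. mat_vec m (transpose_mat U) a' j * (b j - b' j))"
proof -
  have transposed: "bilin m n U a' c = (\<Sum>j<n. mat_vec m (transpose_mat U) a' j * c j)" for c
    unfolding bilin_def mat_vec_def transpose_mat_def
    by (subst sum.swap) (simp add: sum_distrib_left sum_distrib_right mult_ac)
  have "bilin m n U a b - bilin m n U a' b = (\<Sum>i<m. (a i - a' i) * mat_vec n U b i)"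
    by (simp add: bilin_def mat_vec_def sum_distrib_left sum_subtractf[symmetric] algebra_simps)
  moreover have "bilin m n U a' b - bilin m n U a' b' =
      (\<Sum>j<n. mat_vec m (transpose_mat U) a' j * (b j - b' j))"
    by (simp add: transposed sum_subtractf[symmetric] algebra_simps)
  ultimately show ?thesis by linarith
qed

lemma lipschitz_mat_vec:
  assumes "L \<in> lip_consts d n v"
  shows "lipschitz_Rn d (L * enorm n (U i)) (\<lambda>x. mat_vec n U (v x) i)"
  unfolding lipschitz_Rn_def
proof (intro conjI ballI)
  show "0 \<le> L * enorm n (U i)" using lip_consts_nonneg[OF assms] by (simp add: enorm_nonneg)
  fix x y assume xy: "x \<in> Rn d" "y \<in> Rn d"
  have "\<bar>mat_vec n U (v x) i - mat_vec n U (v y) i\<bar> \<le> enorm n (U i) * enorm n (\<lambda>j. v x j - v y j)"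
    unfolding mat_vec_diff unfolding mat_vec_def by (rule abs_sum_mult_le_enorm)
  also have "\<dots> \<le> enorm n (U i) * (L * dist_Rn d x y)"
    by (intro mult_left_mono lip_consts_dist_le[OF assms xy] enorm_nonneg)
  finally show "\<bar>mat_vec n U (v x) i - mat_vec n U (v y) i\<bar> \<le> L * enorm n (U i) * dist_Rn d x y"
    by (simp add: algebra_simps)
qed

lemma lipschitz_enorm_mat_vec:
  assumes "L \<in> lip_consts d n v"
  shows "lipschitz_Rn d (L * frob m n U) (\<lambda>x. enorm m (mat_vec n U (v x)))"
  unfolding lipschitz_Rn_def
proof (intro conjI ballI)
  show "0 \<le> L * frob m n U" using lip_consts_nonneg[OF assms] by (simp add: frob_nonneg)
  fix x y assume xy: "x \<in> Rn d" "y \<in> Rn d"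
  have "\<bar>enorm m (mat_vec n U (v x)) - enorm m (mat_vec n U (v y))\<bar>
      \<le> enorm m (mat_vec n U (\<lambda>j. v x j - v y j))"
    using abs_enorm_diff_le[of m "mat_vec n U (v x)" "mat_vec n U (v y)"] by (simp add: mat_vec_diff)
  also have "\<dots> \<le> frob m n U * enorm n (\<lambda>j. v x j - v y j)" by (rule enorm_mat_vec_le)
  also have "\<dots> \<le> frob m n U * (L * dist_Rn d x y)"
    by (intro mult_left_mono lip_consts_dist_le[OF assms xy] frob_nonneg)
  finally show "\<bar>enorm m (mat_vec n U (v x)) - enorm m (mat_vec n U (v y))\<bar> \<le> L * frob m n U * dist_Rn d x y"
    by (simp add: algebra_simps)
qed

definition bilin_gauge ::
    "nat \<Rightarrow> nat \<Rightarrow> (nat \<Rightarrow> nat \<Rightarrow> real) \<Rightarrow> real \<Rightarrow> real \<Rightarrow> (nat \<Rightarrow> real) \<Rightarrow> (nat \<Rightarrow> real) \<Rightarrow> real" where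
  "bilin_gauge m n U c1 c2 a b = c1 * enorm m (mat_vec n U b) + c2 * enorm n (mat_vec m (transpose_mat U) a)"

lemma bilin_local_lipschitz:
  assumes u: "c1 \<in> lip_consts d m u" and v: "c2 \<in> lip_consts d n v" and xy: "x \<in> Rn d" "y \<in> Rn d"
  shows "\<bar>bilin m n U (u x) (v x) - bilin m n U (u y) (v y)\<bar>
    \<le> dist_Rn d x y * (bilin_gauge m n U c1 c2 (u x) (v x) + bilin_gauge m n U c1 c2 (u y) (v y))"
proof -
  have "\<bar>bilin m n U (u x) (v x) - bilin m n U (u y) (v y)\<bar>
     \<le> enorm m (\<lambda>i. u x i - u y i) * enorm m (mat_vec n U (v x))
      + enorm n (mat_vec m (transpose_mat U) (u y)) * enorm n (\<lambda>j. v x j - v y j)"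
    unfolding bilin_diff by (intro order_trans[OF abs_triangle_ineq] add_mono abs_sum_mult_le_enorm)
  also have "\<dots> \<le> c1 * dist_Rn d x y * enorm m (mat_vec n U (v x))
      + enorm n (mat_vec m (transpose_mat U) (u y)) * (c2 * dist_Rn d x y)"
    by (intro add_mono mult_right_mono mult_left_mono lip_consts_dist_le[OF u xy]
        lip_consts_dist_le[OF v xy] enorm_nonneg)
  also have "\<dots> \<le> dist_Rn d x y * (bilin_gauge m n U c1 c2 (u x) (v x) + bilin_gauge m n U c1 c2 (u y) (v y))"
    using lip_consts_nonneg[OF u] lip_consts_nonneg[OF v] dist_Rn_nonneg[of d x y]
      enorm_nonneg[of n "mat_vec m (transpose_mat U) (u x)"] enorm_nonneg[of m "mat_vec n U (v y)"]
    by (simp add: bilin_gauge_def algebra_simps mult_nonneg_nonneg add_nonneg_nonneg)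
  finally show ?thesis .
qed

lemma lipschitz_bilin_gauge:
  assumes u: "c1 \<in> lip_consts d m u" and v: "c2 \<in> lip_consts d n v"
  shows "lipschitz_Rn d (2 * (c1 * c2 * frob m n U)) (\<lambda>x. bilin_gauge m n U c1 c2 (u x) (v x))"
  unfolding lipschitz_Rn_def
proof (intro conjI ballI)
  have c: "0 \<le> c1" "0 \<le> c2" using u v by (simp_all add: lip_consts_nonneg)
  then show "0 \<le> 2 * (c1 * c2 * frob m n U)" using frob_nonneg by simp
  have N1: "lipschitz_Rn d (c2 * frob m n U) (\<lambda>x. enorm m (mat_vec n U (v x)))"
    by (rule lipschitz_enorm_mat_vec[OF v])
  have N2: "lipschitz_Rn d (c1 * frob m n U) (\<lambda>x. enorm n (mat_vec m (transpose_mat U) (u x)))"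
    using lipschitz_enorm_mat_vec[OF u, of n "transpose_mat U"] by (simp add: frob_transpose_mat)
  fix x y assume xy: "x \<in> Rn d" "y \<in> Rn d"
  have "bilin_gauge m n U c1 c2 (u x) (v x) - bilin_gauge m n U c1 c2 (u y) (v y)
      = c1 * (enorm m (mat_vec n U (v x)) - enorm m (mat_vec n U (v y)))
        + c2 * (enorm n (mat_vec m (transpose_mat U) (u x)) - enorm n (mat_vec m (transpose_mat U) (u y)))"
    (is "?G = c1 * ?A + c2 * ?B")
    by (simp add: bilin_gauge_def algebra_simps)
  then have "\<bar>?G\<bar> \<le> \<bar>c1 * ?A\<bar> + \<bar>c2 * ?B\<bar>" by (simp only: abs_triangle_ineq)
  also have "\<dots> = c1 * \<bar>?A\<bar> + c2 * \<bar>?B\<bar>" using c by (simp add: abs_mult)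
  also have "\<dots> \<le> c1 * (c2 * frob m n U * dist_Rn d x y) + c2 * (c1 * frob m n U * dist_Rn d x y)"
    using c lipschitz_RnD[OF N1 xy] lipschitz_RnD[OF N2 xy] by (intro add_mono mult_left_mono)
  finally show "\<bar>?G\<bar> \<le> 2 * (c1 * c2 * frob m n U) * dist_Rn d x y"
    by (simp add: algebra_simps)
qed

section \<open>Exponential moments from geometric tails\<close>

lemma ennreal_exp_le_layer_sum:
  fixes y h l :: real
  assumes "0 \<le> y" "0 < h" "0 < l"
  shows "ennreal (exp (l * y / h))
    \<le> 1 + (\<Sum>k. ennreal ((exp (l * (real k + 1)) - exp (l * real k)) * indicator {z. z > real k * h} y))"
proof -
  define N where "N = nat \<lceil>y / h\<rceil>"
  have layer_iff: "real k * h < y \<longleftrightarrow> k < N" for k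
  proof -
    have "real k * h < y \<longleftrightarrow> real k < y / h" using assms by (simp add: pos_less_divide_eq)
    also have "\<dots> \<longleftrightarrow> k < N" unfolding N_def by linarith
    finally show ?thesis .
  qed
  have "(\<Sum>k. ennreal ((exp (l * (real k + 1)) - exp (l * real k)) * indicator {z. z > real k * h} y))
      = (\<Sum>k<N. ennreal (exp (l * real (Suc k)) - exp (l * real k)))"
    by (subst suminf_finite[of "{..<N}"]) (auto simp: layer_iff indicator_def add.commute intro!: sum.cong)
  also have "\<dots> = ennreal (\<Sum>k<N. exp (l * real (Suc k)) - exp (l * real k))"
    using assms by (intro sum_ennreal) auto
  also have "(\<Sum>k<N. exp (l * real (Suc k)) - exp (l * real k)) = exp (l * real N) - 1"
    using sum_lessThan_telescope[of "\<lambda>k. exp (l * real k)" N] by simp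
  finally have layers: "(\<Sum>k. ennreal ((exp (l * (real k + 1)) - exp (l * real k)) * indicator {z. z > real k * h} y))
     = ennreal (exp (l * real N) - 1)" .
  have "l * (y / h) \<le> l * real N"
    using assms unfolding N_def by (intro mult_left_mono) linarith+
  then have "ennreal (exp (l * y / h)) \<le> ennreal (1 + (exp (l * real N) - 1))"
    by (intro ennreal_leI) simp
  also have "\<dots> = 1 + ennreal (exp (l * real N) - 1)"
    using assms by (subst ennreal_plus) auto
  finally show ?thesis using layers by simp
qed

lemma suminf_ennreal_geometric:
  fixes a r :: real
  assumes "0 \<le> a" "0 \<le> r" "r < 1"
  shows "(\<Sum>k. ennreal (a * r ^ k)) = ennreal (a / (1 - r))"
proof -
  have sums: "(\<lambda>k. a * r ^ k) sums (a * (1 / (1 - r)))"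
    using assms by (intro sums_mult geometric_sums) simp
  have "0 \<le> a * r ^ k" for k using assms by simp
  from suminf_ennreal2[OF this sums_summable[OF sums]] show ?thesis
    by (simp add: sums_unique[OF sums, symmetric])
qed

lemma (in prob_space) nn_integral_exp_le_of_geometric_tail:
  fixes Y :: "'a \<Rightarrow> real"
  assumes Y_measurable: "Y \<in> borel_measurable M" and Y_nonneg: "\<forall>x\<in>space M. 0 \<le> Y x"
    and h: "0 < h" and q: "0 \<le> q" and l: "0 < l" "exp l * q < 1"
    and tail: "\<forall>k::nat. prob {x\<in>space M. Y x > real k * h} \<le> A * q ^ k"
  shows "(\<integral>\<^sup>+x. ennreal (exp (l * Y x / h)) \<partial>M) \<le> ennreal (1 + A * (exp l - 1) / (1 - exp l * q))"
proof -
  have A: "0 \<le> A" using tail[rule_format, of 0] by (metis measure_nonneg order_trans power_0 mult_1_right)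
  define D where "D k = exp (l * (real k + 1)) - exp (l * real k)" for k :: nat
  have D_nonneg: "0 \<le> D k" for k using l by (simp add: D_def)
  have D_eq: "D k = (exp l - 1) * exp l ^ k" for k
    by (simp add: D_def exp_add algebra_simps flip: exp_of_nat_mult)
  define S where "S k = {x\<in>space M. Y x > real k * h}" for k
  have S_sets: "S k \<in> sets M" for k unfolding S_def using Y_measurable by measurable
  have "(\<integral>\<^sup>+x. ennreal (exp (l * Y x / h)) \<partial>M)
     \<le> (\<integral>\<^sup>+x. 1 + (\<Sum>k. ennreal (D k) * indicator (S k) x) \<partial>M)"
  proof (rule nn_integral_mono)
    fix x assume x: "x \<in> space M"
    have "(\<lambda>k. ennreal (D k * indicator {z. z > real k * h} (Y x))) = (\<lambda>k. ennreal (D k) * indicator (S k) x)"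
      by (intro ext) (simp add: S_def indicator_def x)
    then show "ennreal (exp (l * Y x / h)) \<le> 1 + (\<Sum>k. ennreal (D k) * indicator (S k) x)"
      using ennreal_exp_le_layer_sum[of "Y x" h l] Y_nonneg x h l by (simp add: D_def)
  qed
  also have "\<dots> = (\<integral>\<^sup>+x. 1 \<partial>M) + (\<integral>\<^sup>+x. (\<Sum>k. ennreal (D k) * indicator (S k) x) \<partial>M)"
    using S_sets by (intro nn_integral_add) auto
  also have "\<dots> = 1 + (\<Sum>k. ennreal (D k) * emeasure M (S k))"
    using S_sets by (simp add: nn_integral_suminf nn_integral_cmult_indicator emeasure_space_1)
  also have "(\<Sum>k. ennreal (D k) * emeasure M (S k)) \<le> (\<Sum>k. ennreal (A * (exp l - 1) * (exp l * q) ^ k))"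
  proof (rule suminf_le[OF _ summableI summableI])
    fix k
    have "D k * prob (S k) \<le> D k * (A * q ^ k)"
      using tail D_nonneg by (intro mult_left_mono) (auto simp: S_def)
    also have "\<dots> = A * (exp l - 1) * (exp l * q) ^ k"
      by (simp add: D_eq power_mult_distrib)
    finally show "ennreal (D k) * emeasure M (S k) \<le> ennreal (A * (exp l - 1) * (exp l * q) ^ k)"
      using D_nonneg by (simp add: emeasure_eq_measure ennreal_leI flip: ennreal_mult)
  qed
  also have "\<dots> = ennreal (A * (exp l - 1) / (1 - exp l * q))"
    using A l q by (intro suminf_ennreal_geometric) auto
  moreover have "0 \<le> A * (exp l - 1) / (1 - exp l * q)" using A l by simp
  ultimately show ?thesis by (simp add: ennreal_plus)
qed

lemma geometric_tail_exp_moment: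
  assumes A: "0 \<le> A" and q: "0 \<le> q" "q < 1" and \<eta>: "0 < \<eta>"
  obtains K where "0 < K"
    "\<And>M (Y :: 'a \<Rightarrow> real) h. prob_space M \<Longrightarrow> Y \<in> borel_measurable M \<Longrightarrow> \<forall>x\<in>space M. 0 \<le> Y x \<Longrightarrow>
       0 < h \<Longrightarrow> \<forall>k::nat. measure M {x\<in>space M. Y x > real k * h} \<le> A * q ^ k \<Longrightarrow>
       (\<integral>\<^sup>+x. ennreal (exp (Y x / (K * h))) \<partial>M) \<le> ennreal (1 + \<eta>)"
proof -
  have "((\<lambda>l. exp l * q) \<longlongrightarrow> exp 0 * q) (at_right 0)"
    by (intro tendsto_intros)
  moreover have "((\<lambda>l. A * (exp l - 1) / (1 - exp l * q)) \<longlongrightarrow> A * (exp 0 - 1) / (1 - exp 0 * q)) (at_right 0)"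
    using q by (intro tendsto_intros) auto
  ultimately have "eventually (\<lambda>l. exp l * q < 1 \<and> A * (exp l - 1) / (1 - exp l * q) < \<eta>) (at_right (0::real))"
    using q \<eta> by (auto intro!: eventually_conj order_tendstoD(2))
  then obtain b where "0 < b"
    and b: "\<And>l. 0 < l \<Longrightarrow> l < b \<Longrightarrow> exp l * q < 1 \<and> A * (exp l - 1) / (1 - exp l * q) < \<eta>"
    unfolding eventually_at_right_field by auto
  define l where "l = b / 2"
  have l: "0 < l" "exp l * q < 1" "A * (exp l - 1) / (1 - exp l * q) \<le> \<eta>"
    using b[of l] \<open>0 < b\<close> by (auto simp: l_def)
  show ?thesis
  proof
    show "0 < 1 / l" using l by simp
    fix M :: "'a measure" and Y h
    assume "prob_space M" "Y \<in> borel_measurable M" "\<forall>x\<in>space M. 0 \<le> Y x" "0 < h"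
      "\<forall>k::nat. measure M {x\<in>space M. Y x > real k * h} \<le> A * q ^ k"
    then have "(\<integral>\<^sup>+x. ennreal (exp (l * Y x / h)) \<partial>M) \<le> ennreal (1 + A * (exp l - 1) / (1 - exp l * q))"
      using q l by (intro prob_space.nn_integral_exp_le_of_geometric_tail) auto
    also have "\<dots> \<le> ennreal (1 + \<eta>)" using l by (intro ennreal_leI) simp
    finally show "(\<integral>\<^sup>+x. ennreal (exp (Y x / (1 / l * h))) \<partial>M) \<le> ennreal (1 + \<eta>)"
      by (simp add: mult.commute)
  qed
qed

lemma le_scaled_exp_minus:
  fixes y s :: real
  assumes "0 < s"
  shows "y \<le> s * exp (y / s) - s"
proof -
  have "s * (1 + y / s) \<le> s * exp (y / s)"
    using assms by (intro mult_left_mono exp_ge_add_one_self) auto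
  moreover have "s * (1 + y / s) = s + y" using assms by (simp add: field_simps)
  ultimately show ?thesis by linarith
qed

lemma power2_le_scaled_exp:
  fixes y s :: real
  assumes "0 \<le> y" "0 < s"
  shows "y\<^sup>2 \<le> 2 * s\<^sup>2 * exp (y / s)"
proof -
  have "0 \<le> y / s" using assms by simp
  then have "(y / s)\<^sup>2 / 2 \<le> exp (y / s)"
    using exp_lower_Taylor_quadratic[of "y / s"] by linarith
  then show ?thesis using assms by (simp add: field_simps power2_eq_square)
qed

lemma (in prob_space) moments_le_of_exp_moment:
  fixes Y :: "'a \<Rightarrow> real"
  assumes Y_measurable: "Y \<in> borel_measurable M" and Y_nonneg: "\<forall>x\<in>space M. 0 \<le> Y x" and s: "0 < s"
    and exp_moment: "(\<integral>\<^sup>+x. ennreal (exp (Y x / s)) \<partial>M) \<le> ennreal B"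
  shows "integrable M Y" "expectation Y \<le> s * (B - 1)"
    "integrable M (\<lambda>x. (Y x)\<^sup>2)" "expectation (\<lambda>x. (Y x)\<^sup>2) \<le> 2 * s\<^sup>2 * B"
proof -
  have exp_integrable: "integrable M (\<lambda>x. exp (Y x / s))"
    using Y_measurable exp_moment by (intro integrableI_bounded) (auto simp: le_less_trans)
  have "expectation (\<lambda>x. exp (Y x / s)) \<le> max 0 B"
    using Y_measurable exp_moment
    by (subst integral_eq_nn_integral) (auto intro!: enn2real_leI simp: max_def ennreal_neg)
  moreover have "expectation (\<lambda>x. 1) \<le> expectation (\<lambda>x. exp (Y x / s))"
    using exp_integrable Y_nonneg s by (intro integral_mono) auto
  ultimately have exp_le: "expectation (\<lambda>x. exp (Y x / s)) \<le> B" by (simp add: prob_space)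
  have Y_le: "Y x \<le> s * exp (Y x / s) - s" for x
    by (rule le_scaled_exp_minus[OF s])
  have Y_sq_le: "(Y x)\<^sup>2 \<le> 2 * s\<^sup>2 * exp (Y x / s)" if "x \<in> space M" for x
    using Y_nonneg that s by (intro power2_le_scaled_exp) auto
  have "\<bar>Y x\<bar> \<le> \<bar>s * exp (Y x / s)\<bar>" if "x \<in> space M" for x
    using Y_nonneg that Y_le[of x] s by (simp add: abs_mult)
  then show Y_integrable: "integrable M Y"
    using Y_measurable
    by (intro Bochner_Integration.integrable_bound[OF integrable_mult_right[OF exp_integrable, of s]])
       (auto intro!: AE_I2)
  have "expectation Y \<le> expectation (\<lambda>x. s * exp (Y x / s) - s)"
    using Y_integrable exp_integrable Y_le by (intro integral_mono) auto
  also have "\<dots> \<le> s * (B - 1)"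
    using exp_integrable mult_left_mono[OF exp_le, of s] s by (simp add: prob_space right_diff_distrib)
  finally show "expectation Y \<le> s * (B - 1)" .
  show Y_sq_integrable: "integrable M (\<lambda>x. (Y x)\<^sup>2)"
    using Y_measurable Y_sq_le
    by (intro Bochner_Integration.integrable_bound[OF integrable_mult_right[OF exp_integrable, of "2 * s\<^sup>2"]])
       (auto intro!: AE_I2)
  have "expectation (\<lambda>x. (Y x)\<^sup>2) \<le> expectation (\<lambda>x. 2 * s\<^sup>2 * exp (Y x / s))"
    using Y_sq_integrable exp_integrable Y_sq_le by (intro integral_mono_AE) (auto intro!: AE_I2)
  also have "\<dots> \<le> 2 * s\<^sup>2 * B" using exp_le by (simp add: mult_left_mono)
  finally show "expectation (\<lambda>x. (Y x)\<^sup>2) \<le> 2 * s\<^sup>2 * B" .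
qed

lemma (in prob_space) expectation_le_of_second_moment:
  fixes X :: "'a \<Rightarrow> real"
  assumes "integrable M X" "integrable M (\<lambda>x. (X x)\<^sup>2)" "expectation (\<lambda>x. (X x)\<^sup>2) \<le> s\<^sup>2" "0 \<le> s"
  shows "expectation X \<le> s"
proof -
  have "(expectation X)\<^sup>2 \<le> s\<^sup>2"
    using variance_eq[OF assms(1,2)] variance_positive[of X] assms(3) by linarith
  then show ?thesis using assms(4) by (rule power2_le_imp_le)
qed

lemma psi1_norm_le: "0 < t \<Longrightarrow> (\<integral>\<^sup>+x. ennreal (exp (\<bar>X x\<bar> / t)) \<partial>M) \<le> 2 \<Longrightarrow> psi1_norm M X \<le> ereal t"
  unfolding psi1_norm_def by (intro Inf_lower) auto

lemma (in prob_space) psi1_norm_centered_le_of_exp_moments: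
  fixes X :: "'a \<Rightarrow> real"
  assumes X_measurable: "X \<in> borel_measurable M" and s1: "0 < s1" and scale: "s1 \<le> ln (8 / 5) * s"
    and moment1: "(\<integral>\<^sup>+x. ennreal (exp (\<bar>X x - a\<bar> / s1)) \<partial>M) \<le> ennreal 2"
    and moment2: "(\<integral>\<^sup>+x. ennreal (exp (\<bar>X x - a\<bar> / s)) \<partial>M) \<le> ennreal (5 / 4)"
  shows "psi1_norm M (\<lambda>x. X x - expectation X) \<le> ereal s"
proof -
  define Y where "Y x = \<bar>X x - a\<bar>" for x
  have Y_measurable: "Y \<in> borel_measurable M" unfolding Y_def using X_measurable by measurable
  have Y_nonneg: "\<forall>x\<in>space M. 0 \<le> Y x" by (simp add: Y_def)
  have "0 < ln (8 / 5) * s" using s1 scale by linarith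
  then have s_pos: "0 < s" by (rule zero_less_mult_pos) simp
  have "(\<integral>\<^sup>+x. ennreal (exp (Y x / s1)) \<partial>M) \<le> ennreal 2" using moment1 by (simp add: Y_def)
  from moments_le_of_exp_moment(1,2)[OF Y_measurable Y_nonneg s1 this]
  have Y_integrable: "integrable M Y" and EY: "expectation Y \<le> s1" by simp_all
  have X_le: "norm (X x) \<le> norm (Y x + \<bar>a\<bar>)" if "x \<in> space M" for x
    unfolding Y_def real_norm_def by arith
  have "integrable M (\<lambda>x. Y x + \<bar>a\<bar>)"
    using Y_integrable by (rule Bochner_Integration.integrable_add) simp
  from Bochner_Integration.integrable_bound[OF this X_measurable AE_I2[OF X_le]]
  have "\<bar>expectation X - a\<bar> = \<bar>expectation (\<lambda>x. X x - a)\<bar>" by (simp add: prob_space)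
  also have "\<dots> \<le> expectation Y" unfolding Y_def by (rule integral_abs_bound)
  finally have center: "\<bar>expectation X - a\<bar> \<le> s1" using EY by linarith
  \<comment> \<open>recentring at the mean costs the factor \<open>exp (s1 / s) \<le> 8/5\<close>, and \<open>8/5 * 5/4 = 2\<close>\<close>
  have "s1 / s \<le> ln (8 / 5)" using scale s_pos by (simp add: pos_divide_le_eq mult.commute)
  then have "exp (s1 / s) \<le> exp (ln (8 / 5))" by (simp only: exp_le_cancel_iff)
  then have shift: "exp (s1 / s) \<le> 8 / 5" by simp
  have "ennreal (exp (\<bar>X x - expectation X\<bar> / s)) \<le> ennreal (8 / 5) * ennreal (exp (Y x / s))" for x
  proof -
    have "\<bar>X x - expectation X\<bar> / s \<le> (s1 + Y x) / s"
      using center s_pos by (intro divide_right_mono) (auto simp: Y_def)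
    then have "exp (\<bar>X x - expectation X\<bar> / s) \<le> exp (s1 / s) * exp (Y x / s)"
      by (simp add: add_divide_distrib flip: exp_add)
    also have "\<dots> \<le> 8 / 5 * exp (Y x / s)" using shift by (intro mult_right_mono) auto
    finally show ?thesis by (simp add: ennreal_mult[symmetric])
  qed
  then have "(\<integral>\<^sup>+x. ennreal (exp (\<bar>X x - expectation X\<bar> / s)) \<partial>M)
      \<le> ennreal (8 / 5) * (\<integral>\<^sup>+x. ennreal (exp (Y x / s)) \<partial>M)"
    using Y_measurable by (subst nn_integral_cmult[symmetric]) (auto intro!: nn_integral_mono)
  also have "\<dots> \<le> ennreal (8 / 5) * ennreal (5 / 4)"
    using moment2 unfolding Y_def by (rule mult_left_mono) simp
  also have "\<dots> = 2" by (simp flip: ennreal_mult)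
  finally show ?thesis using s_pos by (intro psi1_norm_le) auto
qed

lemma psi1_norm_centered_le_of_geometric_tail:
  assumes A: "0 \<le> A" and q: "0 \<le> q" "q < 1"
  obtains K where "0 < K"
    "\<And>M (X :: 'a \<Rightarrow> real) a h. prob_space M \<Longrightarrow> X \<in> borel_measurable M \<Longrightarrow> 0 < h \<Longrightarrow>
       \<forall>k::nat. measure M {x\<in>space M. \<bar>X x - a\<bar> > real k * h} \<le> A * q ^ k \<Longrightarrow>
       psi1_norm M (\<lambda>x. X x - (\<integral>y. X y \<partial>M)) \<le> ereal (K * h)"
proof -
  obtain K1 where K1: "0 < K1"
    "\<And>M (Y :: 'a \<Rightarrow> real) h. prob_space M \<Longrightarrow> Y \<in> borel_measurable M \<Longrightarrow> \<forall>x\<in>space M. 0 \<le> Y x \<Longrightarrow>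
       0 < h \<Longrightarrow> \<forall>k::nat. measure M {x\<in>space M. Y x > real k * h} \<le> A * q ^ k \<Longrightarrow>
       (\<integral>\<^sup>+x. ennreal (exp (Y x / (K1 * h))) \<partial>M) \<le> ennreal (1 + 1)"
    by (rule geometric_tail_exp_moment[OF A q zero_less_one]) (rule that)
  obtain K2 where K2: "0 < K2"
    "\<And>M (Y :: 'a \<Rightarrow> real) h. prob_space M \<Longrightarrow> Y \<in> borel_measurable M \<Longrightarrow> \<forall>x\<in>space M. 0 \<le> Y x \<Longrightarrow>
       0 < h \<Longrightarrow> \<forall>k::nat. measure M {x\<in>space M. Y x > real k * h} \<le> A * q ^ k \<Longrightarrow>
       (\<integral>\<^sup>+x. ennreal (exp (Y x / (K2 * h))) \<partial>M) \<le> ennreal (1 + 1 / 4)"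
    by (rule geometric_tail_exp_moment[OF A q, of "1 / 4"]) (simp, rule that)
  define K where "K = max K2 (K1 / ln (8 / 5))"
  have K: "0 < K" "K2 \<le> K" and "K1 / ln (8 / 5) \<le> K"
    using K2(1) by (auto simp: K_def)
  then have "K1 \<le> ln (8 / 5) * K" by (simp add: pos_divide_le_eq mult.commute)
  show ?thesis
  proof (rule that[OF K(1)])
    fix M :: "'a measure" and X a h
    assume M: "prob_space M" and X_measurable: "X \<in> borel_measurable M" and h: "0 < h"
      and tail: "\<forall>k::nat. measure M {x\<in>space M. \<bar>X x - a\<bar> > real k * h} \<le> A * q ^ k"
    have Y_measurable: "(\<lambda>x. \<bar>X x - a\<bar>) \<in> borel_measurable M" using X_measurable by measurable
    note exp_moment = K1(2)[OF M Y_measurable _ h tail] K2(2)[OF M Y_measurable _ h tail]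
    have "\<bar>X x - a\<bar> / (K * h) \<le> \<bar>X x - a\<bar> / (K2 * h)" for x
      using K K2(1) h by (intro divide_left_mono mult_right_mono) auto
    then have "(\<integral>\<^sup>+x. ennreal (exp (\<bar>X x - a\<bar> / (K * h))) \<partial>M)
        \<le> (\<integral>\<^sup>+x. ennreal (exp (\<bar>X x - a\<bar> / (K2 * h))) \<partial>M)"
      by (intro nn_integral_mono ennreal_leI) simp
    also have "\<dots> \<le> ennreal (5 / 4)" using exp_moment(2) by simp
    finally have moment2: "(\<integral>\<^sup>+x. ennreal (exp (\<bar>X x - a\<bar> / (K * h))) \<partial>M) \<le> ennreal (5 / 4)" .
    have moment1: "(\<integral>\<^sup>+x. ennreal (exp (\<bar>X x - a\<bar> / (K1 * h))) \<partial>M) \<le> ennreal 2"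
      using exp_moment(1) by simp
    have "0 < K1 * h" using K1(1) h by simp
    moreover have "K1 * h \<le> ln (8 / 5) * (K * h)"
      using mult_right_mono[OF \<open>K1 \<le> ln (8 / 5) * K\<close> less_imp_le[OF h]] by (simp add: mult.assoc)
    ultimately show "psi1_norm M (\<lambda>x. X x - (\<integral>y. X y \<partial>M)) \<le> ereal (K * h)"
      using moment1 moment2 by (rule prob_space.psi1_norm_centered_le_of_exp_moments[OF M X_measurable])
  qed
qed

definition quarter_radius :: "real \<Rightarrow> real" where
  "quarter_radius c = sqrt (4 * ln 8 / c)"

lemma quarter_radius_pos: "0 < c \<Longrightarrow> 0 < quarter_radius c"
  by (simp add: quarter_radius_def)

lemma exp_quarter_radius:
  assumes "0 < c"
  shows "2 * exp (- c * (quarter_radius c)\<^sup>2 / 4) = 1 / 4"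
proof -
  have "- c * (quarter_radius c)\<^sup>2 / 4 = - ln 8"
    using assms by (simp add: quarter_radius_def)
  then show ?thesis by (simp add: exp_minus)
qed

locale lip_concentration_space = prob_space M for M :: "(nat \<Rightarrow> real) measure" +
  fixes c :: real and d :: nat
  assumes c_pos: "0 < c" and space_eq: "space M = Rn d"
    and concentration: "lip_concentration c d M"
begin

lemma lipschitz_is_lip: "lipschitz_Rn d L \<phi> \<Longrightarrow> is_lip d 1 (\<lambda>x i. \<phi> x)"
  unfolding is_lip_def lip_consts_one_iff[symmetric] by blast

lemma lipschitz_integrable: "lipschitz_Rn d L \<phi> \<Longrightarrow> integrable M \<phi>"
  using concentration lipschitz_is_lip unfolding lip_concentration_def by blast

lemma lipschitz_measurable: "lipschitz_Rn d L \<phi> \<Longrightarrow> \<phi> \<in> borel_measurable M"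
  using lipschitz_integrable by (rule borel_measurable_integrable)

lemma lipschitz_deviation_events:
  assumes "lipschitz_Rn d L \<phi>"
  shows "{x\<in>space M. \<bar>\<phi> x - m\<bar> > t} \<in> events"
  using lipschitz_measurable[OF assms] by measurable

lemma lipschitz_zero_eq_expectation:
  fixes \<phi> :: "(nat \<Rightarrow> real) \<Rightarrow> real"
  assumes "lipschitz_Rn d 0 \<phi>" and x: "x \<in> space M"
  shows "\<phi> x = expectation \<phi>"
proof -
  have "\<phi> y = \<phi> x" if "y \<in> space M" for y
    using lipschitz_RnD[OF assms(1), of y x] that x by (simp add: space_eq)
  then have "expectation \<phi> = expectation (\<lambda>_. \<phi> x)"
    by (rule Bochner_Integration.integral_cong[OF refl])
  also have "\<dots> = \<phi> x" by (simp add: prob_space)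
  finally show ?thesis ..
qed

lemma lipschitz_zero_centered_square:
  assumes "lipschitz_Rn d 0 \<phi>" "expectation \<phi> = 0"
  shows "integrable M (\<lambda>x. (\<phi> x)\<^sup>2) \<and> expectation (\<lambda>x. (\<phi> x)\<^sup>2) = 0"
proof -
  have vanish: "(\<phi> x)\<^sup>2 = 0" if "x \<in> space M" for x
    using lipschitz_zero_eq_expectation[OF assms(1) that] assms(2) by simp
  have "integrable M (\<lambda>x. (\<phi> x)\<^sup>2) \<longleftrightarrow> integrable M (\<lambda>x. 0 :: real)"
    by (rule Bochner_Integration.integrable_cong) (simp_all add: vanish)
  moreover have "expectation (\<lambda>x. (\<phi> x)\<^sup>2) = expectation (\<lambda>x. 0)"
    by (rule Bochner_Integration.integral_cong) (simp_all add: vanish)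
  ultimately show ?thesis by simp
qed

lemma lipschitz_tail:
  assumes lip: "lipschitz_Rn d L \<phi>" and t: "0 < t"
  shows "prob {x\<in>space M. \<bar>\<phi> x - expectation \<phi>\<bar> > t} \<le> 2 * exp (- c * t\<^sup>2 / L\<^sup>2)"
proof -
  define l where "l = lipnorm d 1 (\<lambda>x i. \<phi> x)"
  have l_lip: "lipschitz_Rn d l \<phi>"
    using lipnorm_in_lip_consts[OF lipschitz_is_lip[OF lip]] unfolding l_def lip_consts_one_iff .
  show ?thesis
  proof (cases "l = 0")
    \<comment> \<open>(A2) says nothing useful when the Lipschitz norm vanishes (its bound divides by zero),
      but then \<open>\<phi>\<close> is constant\<close>
    case True
    with l_lip have "\<phi> x = expectation \<phi>" if "x \<in> space M" for x
      using that by (simp add: lipschitz_zero_eq_expectation)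
    then have no_deviation: "{x\<in>space M. \<bar>\<phi> x - expectation \<phi>\<bar> > t} = {}" using t by auto
    show ?thesis unfolding no_deviation by simp
  next
    case False
    moreover have "0 \<le> l" by (rule lipschitz_Rn_nonneg[OF l_lip])
    moreover have "l \<le> L" using lip unfolding l_def lip_consts_one_iff[symmetric] by (rule lipnorm_le)
    ultimately have "c * t\<^sup>2 / L\<^sup>2 \<le> c * t\<^sup>2 / l\<^sup>2"
      using c_pos t by (intro divide_left_mono power_mono mult_pos_pos) auto
    then have "2 * exp (- c * t\<^sup>2 / l\<^sup>2) \<le> 2 * exp (- c * t\<^sup>2 / L\<^sup>2)" by simp
    moreover have "prob {x\<in>space M. \<bar>\<phi> x - expectation \<phi>\<bar> > t} \<le> 2 * exp (- c * t\<^sup>2 / l\<^sup>2)"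
      using concentration[unfolded lip_concentration_def, rule_format, OF lipschitz_is_lip[OF lip]] t
      unfolding l_def by blast
    ultimately show ?thesis by linarith
  qed
qed

lemma lipschitz_tail_geometric:
  assumes lip: "lipschitz_Rn d L \<phi>" and L: "0 < L"
  shows "prob {x\<in>space M. \<bar>\<phi> x - expectation \<phi>\<bar> > real k * L} \<le> 2 * exp (- c) ^ k"
proof (cases "k = 0")
  case True
  then show ?thesis using prob_le_1 by (simp add: order_trans[OF prob_le_1])
next
  case False
  then have "real k \<le> (real k)\<^sup>2" by (simp add: power2_eq_square)
  then have "exp (- c * (real k * L)\<^sup>2 / L\<^sup>2) \<le> exp (- c) ^ k"
    using L c_pos by (simp add: power_mult_distrib flip: exp_of_nat_mult)
  then show ?thesis
    using lipschitz_tail[OF lip, of "real k * L"] False L by simp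
qed

lemma lipschitz_deviation_le_quarter:
  assumes "lipschitz_Rn d (2 * L) \<phi>" and "0 < L"
  shows "prob {x\<in>space M. \<bar>\<phi> x - expectation \<phi>\<bar> > quarter_radius c * L} \<le> 1 / 4"
  using lipschitz_tail[OF assms(1), of "quarter_radius c * L"] assms(2) c_pos
  by (simp add: quarter_radius_pos power_mult_distrib exp_quarter_radius[OF c_pos, symmetric])

end

locale lip_variance_bound = lip_concentration_space +
  fixes D :: real
  assumes D_nonneg: "0 \<le> D"
    and second_moment: "\<And>L \<phi>. lipschitz_Rn d L \<phi> \<Longrightarrow> expectation \<phi> = 0 \<Longrightarrow>
      integrable M (\<lambda>x. (\<phi> x)\<^sup>2) \<and> expectation (\<lambda>x. (\<phi> x)\<^sup>2) \<le> D * L\<^sup>2"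

lemma lip_variance_bound_uniform:
  assumes c: "0 < c"
  obtains D where "0 \<le> D" "\<And>M d. lip_concentration_space M c d \<Longrightarrow> lip_variance_bound M c d D"
proof -
  have A: "(0::real) \<le> 2" and q: "0 \<le> exp (- c)" "exp (- c) < 1" using c by auto
  obtain K where K: "0 < K"
    "\<And>M (Y :: (nat \<Rightarrow> real) \<Rightarrow> real) h. prob_space M \<Longrightarrow> Y \<in> borel_measurable M \<Longrightarrow>
       \<forall>x\<in>space M. 0 \<le> Y x \<Longrightarrow> 0 < h \<Longrightarrow> \<forall>k::nat. measure M {x\<in>space M. Y x > real k * h} \<le> 2 * exp (- c) ^ k \<Longrightarrow>
       (\<integral>\<^sup>+x. ennreal (exp (Y x / (K * h))) \<partial>M) \<le> ennreal (1 + 1)"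
    by (rule geometric_tail_exp_moment[OF A q zero_less_one]) (rule that)
  show ?thesis
  proof (rule that[of "4 * K\<^sup>2"])
    show "0 \<le> 4 * K\<^sup>2" by simp
    fix M d assume M: "lip_concentration_space M c d"
    interpret lip_concentration_space M c d by (rule M)
    show "lip_variance_bound M c d (4 * K\<^sup>2)"
    proof (intro lip_variance_bound.intro lip_variance_bound_axioms.intro M)
      show "0 \<le> 4 * K\<^sup>2" by simp
      fix L \<phi> assume lip: "lipschitz_Rn d L \<phi>" and centered: "expectation \<phi> = 0"
      show "integrable M (\<lambda>x. (\<phi> x)\<^sup>2) \<and> expectation (\<lambda>x. (\<phi> x)\<^sup>2) \<le> 4 * K\<^sup>2 * L\<^sup>2"
      proof (cases "L = 0")
        case True
        with lip centered show ?thesis by (simp add: lipschitz_zero_centered_square)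
      next
        case False
        then have L: "0 < L" using lipschitz_Rn_nonneg[OF lip] by simp
        have Y_measurable: "(\<lambda>x. \<bar>\<phi> x\<bar>) \<in> borel_measurable M"
          using lipschitz_measurable[OF lip] by measurable
        have Y_nonneg: "\<forall>x\<in>space M. 0 \<le> \<bar>\<phi> x\<bar>" by simp
        have "\<forall>k::nat. prob {x\<in>space M. \<bar>\<phi> x\<bar> > real k * L} \<le> 2 * exp (- c) ^ k"
          using lipschitz_tail_geometric[OF lip L] centered by simp
        from K(2)[OF prob_space_axioms Y_measurable Y_nonneg L this]
        have "(\<integral>\<^sup>+x. ennreal (exp (\<bar>\<phi> x\<bar> / (K * L))) \<partial>M) \<le> ennreal 2" by simp
        from moments_le_of_exp_moment(3,4)[OF Y_measurable Y_nonneg _ this]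
        show ?thesis using K(1) L by (simp add: power_mult_distrib)
      qed
    qed
  qed
qed

section \<open>Concentration of locally Lipschitz functions\<close>

lemma (in prob_space) exists_outside_events:
  assumes "A \<in> events" "B \<in> events" "prob A + prob B < 1"
  obtains x where "x \<in> space M" "x \<notin> A" "x \<notin> B"
proof (rule ccontr)
  assume "\<not> thesis"
  then have "space M \<subseteq> A \<union> B" using that by blast
  then have "prob (space M) \<le> prob (A \<union> B)" using assms(1,2) by (intro finite_measure_mono) auto
  also have "\<dots> \<le> prob A + prob B" using assms(1,2) by (rule measure_Un_le)
  finally show False using assms(3) prob_space by simp
qed

context lip_concentration_space
begin

context
  fixes f G :: "(nat \<Rightarrow> real) \<Rightarrow> real" and b \<mu> :: real
  assumes b_pos: "0 < b" and \<mu>_nonneg: "0 \<le> \<mu>"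
    and f_local_lipschitz: "\<And>x y. x \<in> Rn d \<Longrightarrow> y \<in> Rn d \<Longrightarrow> \<bar>f x - f y\<bar> \<le> dist_Rn d x y * (G x + G y)"
    and G_lipschitz: "lipschitz_Rn d (2 * b) G"
    and G_expectation: "expectation G \<le> \<mu> * b"
begin

abbreviation (input) \<rho> where "\<rho> \<equiv> quarter_radius c"
abbreviation (input) a\<^sub>0 where "a\<^sub>0 \<equiv> (\<mu> + \<rho>) * b"
abbreviation (input) sublevel where "sublevel a \<equiv> {y \<in> Rn d. G y \<le> a}"
abbreviation (input) ext where "ext a \<equiv> mcshane_ext d (2 * a) f (sublevel a)"

lemma \<rho>_pos: "0 < \<rho>"
  using c_pos by (rule quarter_radius_pos)

lemma a\<^sub>0_pos: "0 < a\<^sub>0"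
  using \<mu>_nonneg \<rho>_pos b_pos by simp

lemma G_measurable: "G \<in> borel_measurable M"
  using G_lipschitz by (rule lipschitz_measurable)

lemma prob_gauge_large: "prob {x\<in>space M. G x > a\<^sub>0} \<le> 1 / 4"
proof -
  have "{x\<in>space M. G x > a\<^sub>0} \<subseteq> {x\<in>space M. \<bar>G x - expectation G\<bar> > \<rho> * b}"
    using G_expectation by (auto simp: distrib_right)
  then have "prob {x\<in>space M. G x > a\<^sub>0} \<le> prob {x\<in>space M. \<bar>G x - expectation G\<bar> > \<rho> * b}"
    using G_measurable by (intro finite_measure_mono) measurable
  also have "\<dots> \<le> 1 / 4" by (rule lipschitz_deviation_le_quarter[OF G_lipschitz b_pos])
  finally show ?thesis .
qed

lemma sublevel_nonempty: "a\<^sub>0 \<le> a \<Longrightarrow> sublevel a \<noteq> {}"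
proof -
  assume a: "a\<^sub>0 \<le> a"
  have large: "{x\<in>space M. G x > a\<^sub>0} \<in> events" using G_measurable by measurable
  have "prob {x\<in>space M. G x > a\<^sub>0} + prob {} < 1" using prob_gauge_large by simp
  then obtain x where "x \<in> space M" "x \<notin> {x\<in>space M. G x > a\<^sub>0}" "x \<notin> {}"
    by (rule exists_outside_events[OF large sets.empty_sets]) (rule that)
  then have "x \<in> sublevel a" using a space_eq by auto
  then show ?thesis by blast
qed

lemma sublevel_lipschitz:
  assumes "x \<in> sublevel a" "y \<in> sublevel a"
  shows "\<bar>f x - f y\<bar> \<le> 2 * a * dist_Rn d x y"
proof -
  have "\<bar>f x - f y\<bar> \<le> dist_Rn d x y * (G x + G y)" using assms by (intro f_local_lipschitz) auto
  also have "\<dots> \<le> dist_Rn d x y * (2 * a)" using assms dist_Rn_nonneg by (intro mult_left_mono) auto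
  finally show ?thesis by (simp add: mult.commute)
qed

lemma ext_eq:
  assumes a: "a\<^sub>0 \<le> a" and x: "x \<in> sublevel a"
  shows "ext a x = f x"
proof -
  have "0 \<le> 2 * a" using a a\<^sub>0_pos by simp
  from mcshane_ext_eq[OF sublevel_nonempty[OF a] this sublevel_lipschitz x] show ?thesis .
qed

lemma lipschitz_ext:
  assumes a: "a\<^sub>0 \<le> a"
  shows "lipschitz_Rn d (2 * a) (ext a)"
proof -
  have "0 \<le> 2 * a" using a a\<^sub>0_pos by simp
  from lipschitz_mcshane_ext[OF sublevel_nonempty[OF a] this sublevel_lipschitz] show ?thesis .
qed

lemma prob_ext_deviation:
  assumes a: "a\<^sub>0 \<le> a"
  shows "prob {x\<in>space M. \<bar>ext a x - expectation (ext a)\<bar> > \<rho> * a} \<le> 1 / 4"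
proof -
  have "0 < a" using a a\<^sub>0_pos by simp
  with lipschitz_ext[OF a] show ?thesis by (rule lipschitz_deviation_le_quarter)
qed

text \<open>Outside three events of probability at most \<open>1/4\<close> each, \<open>ext a\<close> and \<open>ext a\<^sub>0\<close> agree with \<open>f\<close>
  and are close to their means, so the two means are close.\<close>

lemma expectation_ext_close:
  assumes a: "a\<^sub>0 \<le> a"
  shows "\<bar>expectation (ext a) - expectation (ext a\<^sub>0)\<bar> \<le> 2 * \<rho> * a"
proof -
  define B1 where "B1 = {x\<in>space M. G x > a\<^sub>0}"
  define B2 where "B2 = {x\<in>space M. \<bar>ext a x - expectation (ext a)\<bar> > \<rho> * a}"
  define B3 where "B3 = {x\<in>space M. \<bar>ext a\<^sub>0 x - expectation (ext a\<^sub>0)\<bar> > \<rho> * a\<^sub>0}"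
  have "B1 \<in> events" unfolding B1_def using G_measurable by measurable
  moreover have "B2 \<in> events" unfolding B2_def by (rule lipschitz_deviation_events[OF lipschitz_ext[OF a]])
  moreover have "B3 \<in> events" unfolding B3_def by (rule lipschitz_deviation_events[OF lipschitz_ext[OF order_refl]])
  ultimately have events: "B1 \<in> events" "B2 \<in> events" "B3 \<in> events" by blast+
  have "prob (B1 \<union> B2) + prob B3 \<le> prob B1 + prob B2 + prob B3"
    using events by (simp add: measure_Un_le)
  also have "\<dots> \<le> 1/4 + 1/4 + 1/4"
    using prob_gauge_large prob_ext_deviation[OF a] prob_ext_deviation[OF order_refl]
    unfolding B1_def B2_def B3_def by simp
  finally have small: "prob (B1 \<union> B2) + prob B3 < 1" by simp
  have "B1 \<union> B2 \<in> events" using events by auto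
  then obtain x where x: "x \<in> space M" "x \<notin> B1 \<union> B2" "x \<notin> B3"
    by (rule exists_outside_events[OF _ events(3) small]) (rule that)
  then have "x \<in> sublevel a\<^sub>0" "x \<in> sublevel a" using a space_eq by (auto simp: B1_def)
  then have "ext a x = ext a\<^sub>0 x" using ext_eq[OF a] ext_eq[OF order_refl] by simp
  moreover have "\<bar>ext a x - expectation (ext a)\<bar> \<le> \<rho> * a" "\<bar>ext a\<^sub>0 x - expectation (ext a\<^sub>0)\<bar> \<le> \<rho> * a\<^sub>0"
    using x by (auto simp: B2_def B3_def)
  moreover have "\<rho> * a\<^sub>0 \<le> \<rho> * a" using a \<rho>_pos by simp
  ultimately show ?thesis by linarith
qed

lemma local_lipschitz_deviation_subset:
  assumes a: "a\<^sub>0 \<le> a" and half: "\<mu> * b \<le> a / 2" and shift: "2 * \<rho> * a \<le> t / 2"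
  shows "{x\<in>space M. \<bar>f x - expectation (ext a\<^sub>0)\<bar> > t}
    \<subseteq> {x\<in>space M. \<bar>G x - expectation G\<bar> > a / 2} \<union> {x\<in>space M. \<bar>ext a x - expectation (ext a)\<bar> > t / 2}"
proof
  fix x assume x: "x \<in> {x\<in>space M. \<bar>f x - expectation (ext a\<^sub>0)\<bar> > t}"
  show "x \<in> {x\<in>space M. \<bar>G x - expectation G\<bar> > a / 2} \<union> {x\<in>space M. \<bar>ext a x - expectation (ext a)\<bar> > t / 2}"
  proof (cases "G x \<le> a")
    case True
    then have "ext a x = f x" using x space_eq by (intro ext_eq[OF a]) auto
    then have "t < \<bar>ext a x - expectation (ext a)\<bar> + 2 * \<rho> * a"
      using x expectation_ext_close[OF a] by auto
    then show ?thesis using x shift by auto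
  next
    case False
    then have "a / 2 < \<bar>G x - expectation G\<bar>"
      using half G_expectation abs_ge_self[of "G x - expectation G"] by linarith
    then show ?thesis using x by simp
  qed
qed

lemma local_lipschitz_tail:
  assumes \<sigma>: "(2 * \<mu> + 4 * \<rho>)\<^sup>2 \<le> \<sigma>"
  shows "prob {x\<in>space M. \<bar>f x - expectation (ext a\<^sub>0)\<bar> > \<sigma> * b} \<le> 4 * exp (- c * \<sigma> / 16)"
proof -
  define r where "r = sqrt \<sigma>"
  have "sqrt ((2 * \<mu> + 4 * \<rho>)\<^sup>2) \<le> r" unfolding r_def using \<sigma> by (rule real_sqrt_le_mono)
  then have r: "2 * \<mu> + 4 * \<rho> \<le> r" using \<mu>_nonneg \<rho>_pos by simp
  have "0 \<le> \<sigma>" using \<sigma> by (meson order_trans zero_le_power2)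
  then have \<sigma>_eq: "\<sigma> = r\<^sup>2" by (simp add: r_def)
  have \<sigma>_pos: "0 < \<sigma>" unfolding \<sigma>_eq using r \<mu>_nonneg \<rho>_pos by simp
  \<comment> \<open>at the level \<open>a = sqrt \<sigma> * b\<close> both tail exponents below equal \<open>c \<sigma> / 16\<close>\<close>
  define a where "a = r * b"
  have a: "a\<^sub>0 \<le> a" unfolding a_def using r \<mu>_nonneg \<rho>_pos b_pos by (intro mult_right_mono) auto
  have a_pos: "0 < a" using a a\<^sub>0_pos by simp
  have half: "\<mu> * b \<le> a / 2" unfolding a_def using r \<rho>_pos b_pos by (simp add: mult_right_mono)
  have "4 * \<rho> * r \<le> r * r" using r \<mu>_nonneg \<rho>_pos by (intro mult_right_mono) auto
  then have "4 * \<rho> * r * b \<le> r * r * b" using b_pos by (simp add: mult_right_mono)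
  then have shift: "2 * \<rho> * a \<le> \<sigma> * b / 2"
    unfolding a_def \<sigma>_eq power2_eq_square by (simp add: field_simps)
  define C1 where "C1 = {x\<in>space M. \<bar>G x - expectation G\<bar> > a / 2}"
  define C2 where "C2 = {x\<in>space M. \<bar>ext a x - expectation (ext a)\<bar> > \<sigma> * b / 2}"
  have "{x\<in>space M. \<bar>f x - expectation (ext a\<^sub>0)\<bar> > \<sigma> * b} \<subseteq> C1 \<union> C2"
    unfolding C1_def C2_def using a half shift by (rule local_lipschitz_deviation_subset)
  moreover have "C1 \<in> events" unfolding C1_def by (rule lipschitz_deviation_events[OF G_lipschitz])
  moreover have "C2 \<in> events" unfolding C2_def by (rule lipschitz_deviation_events[OF lipschitz_ext[OF a]])
  ultimately have "prob {x\<in>space M. \<bar>f x - expectation (ext a\<^sub>0)\<bar> > \<sigma> * b} \<le> prob C1 + prob C2"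
    by (meson finite_measure_mono measure_Un_le order_trans sets.Un)
  moreover have "prob C1 \<le> 2 * exp (- c * \<sigma> / 16)"
  proof -
    have exponent: "- c * (a / 2)\<^sup>2 / (2 * b)\<^sup>2 = - c * \<sigma> / 16"
      using b_pos by (simp add: a_def \<sigma>_eq power2_eq_square field_simps)
    have "prob C1 \<le> 2 * exp (- c * (a / 2)\<^sup>2 / (2 * b)\<^sup>2)"
      unfolding C1_def using a_pos by (intro lipschitz_tail[OF G_lipschitz]) simp
    then show ?thesis unfolding exponent .
  qed
  moreover have "prob C2 \<le> 2 * exp (- c * \<sigma> / 16)"
  proof -
    have exponent: "- c * (\<sigma> * b / 2)\<^sup>2 / (2 * a)\<^sup>2 = - c * \<sigma> / 16"
      using b_pos a_pos by (simp add: a_def \<sigma>_eq power2_eq_square field_simps)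
    have "prob C2 \<le> 2 * exp (- c * (\<sigma> * b / 2)\<^sup>2 / (2 * a)\<^sup>2)"
      unfolding C2_def using \<sigma>_pos b_pos by (intro lipschitz_tail[OF lipschitz_ext[OF a]]) simp
    then show ?thesis unfolding exponent .
  qed
  ultimately show ?thesis by linarith
qed

lemma local_lipschitz_geometric_tail:
  "\<exists>m. \<forall>k::nat. prob {x\<in>space M. \<bar>f x - m\<bar> > real k * ((2 * \<mu> + 4 * \<rho>)\<^sup>2 * b)}
    \<le> 4 * exp (- c * (2 * \<mu> + 4 * \<rho>)\<^sup>2 / 16) ^ k"
proof (intro exI allI)
  fix k :: nat
  show "prob {x\<in>space M. \<bar>f x - expectation (ext a\<^sub>0)\<bar> > real k * ((2 * \<mu> + 4 * \<rho>)\<^sup>2 * b)}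
    \<le> 4 * exp (- c * (2 * \<mu> + 4 * \<rho>)\<^sup>2 / 16) ^ k"
  proof (cases "k = 0")
    case True
    then show ?thesis by (simp add: order_trans[OF prob_le_1])
  next
    case False
    then have "(2 * \<mu> + 4 * \<rho>)\<^sup>2 \<le> real k * (2 * \<mu> + 4 * \<rho>)\<^sup>2"
      by (simp add: mult_le_cancel_right1)
    from local_lipschitz_tail[OF this] show ?thesis
      by (simp add: mult.assoc exp_of_nat_mult[symmetric] algebra_simps)
  qed
qed

end

end

context lip_variance_bound
begin

lemma expectation_enorm_mat_vec_le:
  assumes v: "L \<in> lip_consts d n v" and centered: "\<forall>j<n. expectation (\<lambda>x. v x j) = 0"
  shows "expectation (\<lambda>x. enorm m (mat_vec n U (v x))) \<le> sqrt D * L * frob m n U"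
proof -
  define \<phi> where "\<phi> i x = mat_vec n U (v x) i" for i x
  have \<phi>_centered: "expectation (\<phi> i) = 0" for i
  proof -
    have "integrable M (\<lambda>x. v x j)" if "j < n" for j
      using lipschitz_integrable[OF lipschitz_Rn_coordinate[OF v that]] .
    then have "expectation (\<phi> i) = (\<Sum>j<n. U i j * expectation (\<lambda>x. v x j))"
      unfolding \<phi>_def mat_vec_def by (simp add: integral_sum)
    then show ?thesis using centered by simp
  qed
  have \<phi>_moment: "integrable M (\<lambda>x. (\<phi> i x)\<^sup>2) \<and> expectation (\<lambda>x. (\<phi> i x)\<^sup>2) \<le> D * (L * enorm n (U i))\<^sup>2" for i
    using second_moment[OF _ \<phi>_centered] lipschitz_mat_vec[OF v] unfolding \<phi>_def by blast
  have norm_sq: "(enorm m (mat_vec n U (v x)))\<^sup>2 = (\<Sum>i<m. (\<phi> i x)\<^sup>2)" for x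
    by (simp add: \<phi>_def enorm_power2)
  have "expectation (\<lambda>x. (enorm m (mat_vec n U (v x)))\<^sup>2) = (\<Sum>i<m. expectation (\<lambda>x. (\<phi> i x)\<^sup>2))"
    unfolding norm_sq using \<phi>_moment by (simp add: integral_sum)
  also have "\<dots> \<le> (\<Sum>i<m. D * (L * enorm n (U i))\<^sup>2)" using \<phi>_moment by (intro sum_mono) auto
  also have "\<dots> = (sqrt D * L * frob m n U)\<^sup>2"
    using D_nonneg by (simp add: frob_power2_eq_sum_rows power_mult_distrib sum_distrib_left mult_ac)
  finally have "expectation (\<lambda>x. (enorm m (mat_vec n U (v x)))\<^sup>2) \<le> (sqrt D * L * frob m n U)\<^sup>2" .
  moreover have "integrable M (\<lambda>x. (enorm m (mat_vec n U (v x)))\<^sup>2)"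
    unfolding norm_sq using \<phi>_moment by simp
  moreover have "0 \<le> sqrt D * L * frob m n U"
    using lip_consts_nonneg[OF v] D_nonneg frob_nonneg by simp
  ultimately show ?thesis
    using expectation_le_of_second_moment[OF lipschitz_integrable[OF lipschitz_enorm_mat_vec[OF v]]] by blast
qed

lemma expectation_bilin_gauge_le:
  assumes u: "c1 \<in> lip_consts d m u" and v: "c2 \<in> lip_consts d n v"
    and u_centered: "\<forall>i<m. expectation (\<lambda>x. u x i) = 0" and v_centered: "\<forall>j<n. expectation (\<lambda>x. v x j) = 0"
  shows "expectation (\<lambda>x. bilin_gauge m n U c1 c2 (u x) (v x)) \<le> 2 * sqrt D * (c1 * c2 * frob m n U)"
proof -
  have "expectation (\<lambda>x. bilin_gauge m n U c1 c2 (u x) (v x))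
      = c1 * expectation (\<lambda>x. enorm m (mat_vec n U (v x)))
        + c2 * expectation (\<lambda>x. enorm n (mat_vec m (transpose_mat U) (u x)))"
    using lipschitz_integrable[OF lipschitz_enorm_mat_vec[OF v]]
      lipschitz_integrable[OF lipschitz_enorm_mat_vec[OF u]]
    by (simp add: bilin_gauge_def)
  also have "\<dots> \<le> c1 * (sqrt D * c2 * frob m n U) + c2 * (sqrt D * c1 * frob n m (transpose_mat U))"
    using lip_consts_nonneg[OF u] lip_consts_nonneg[OF v]
      expectation_enorm_mat_vec_le[OF v v_centered] expectation_enorm_mat_vec_le[OF u u_centered]
    by (intro add_mono mult_left_mono)
  finally show ?thesis by (simp add: frob_transpose_mat algebra_simps)
qed

lemma bilin_geometric_tail:
  assumes u: "c1 \<in> lip_consts d m u" and v: "c2 \<in> lip_consts d n v"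
    and u_centered: "\<forall>i<m. expectation (\<lambda>x. u x i) = 0" and v_centered: "\<forall>j<n. expectation (\<lambda>x. v x j) = 0"
    and b: "0 < b" and b_bound: "c1 * c2 * frob m n U \<le> b"
  shows "\<exists>a. \<forall>k::nat. prob {x\<in>space M. \<bar>bilin m n U (u x) (v x) - a\<bar>
      > real k * ((4 * sqrt D + 4 * quarter_radius c)\<^sup>2 * b)}
    \<le> 4 * exp (- c * (4 * sqrt D + 4 * quarter_radius c)\<^sup>2 / 16) ^ k"
proof -
  have G_lipschitz: "lipschitz_Rn d (2 * b) (\<lambda>x. bilin_gauge m n U c1 c2 (u x) (v x))"
    using lipschitz_bilin_gauge[OF u v] by (rule lipschitz_Rn_mono) (simp add: b_bound)
  have "2 * sqrt D * (c1 * c2 * frob m n U) \<le> 2 * sqrt D * b"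
    using b_bound D_nonneg by (simp add: mult_left_mono)
  with expectation_bilin_gauge_le[where U = U, OF u v u_centered v_centered]
  have G_expectation: "expectation (\<lambda>x. bilin_gauge m n U c1 c2 (u x) (v x)) \<le> 2 * sqrt D * b"
    by linarith
  have "0 \<le> 2 * sqrt D" using D_nonneg by simp
  from local_lipschitz_geometric_tail[OF b this bilin_local_lipschitz[OF u v] G_lipschitz G_expectation]
  show ?thesis by simp
qed

end

lemma bilin_measurable:
  assumes "\<forall>i<m. (\<lambda>x. u x i) \<in> borel_measurable M" "\<forall>j<n. (\<lambda>x. v x j) \<in> borel_measurable M"
  shows "(\<lambda>x. bilin m n U (u x) (v x)) \<in> borel_measurable M"
  unfolding bilin_def using assms by (intro borel_measurable_sum borel_measurable_times) auto

lemma bilin_psi1_norm_le: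
  assumes c: "0 < c"
  obtains C where "0 < C"
    "\<And>M d m n u v U c1 c2 b. lip_concentration_space M c d \<Longrightarrow>
       c1 \<in> lip_consts d m u \<Longrightarrow> c2 \<in> lip_consts d n v \<Longrightarrow>
       \<forall>i<m. (\<integral>x. u x i \<partial>M) = 0 \<Longrightarrow> \<forall>j<n. (\<integral>x. v x j \<partial>M) = 0 \<Longrightarrow>
       0 < b \<Longrightarrow> c1 * c2 * frob m n U \<le> b \<Longrightarrow>
       psi1_norm M (\<lambda>x. bilin m n U (u x) (v x) - (\<integral>y. bilin m n U (u y) (v y) \<partial>M)) \<le> ereal (C * b)"
proof -
  obtain D where D: "0 \<le> D" "\<And>M d. lip_concentration_space M c d \<Longrightarrow> lip_variance_bound M c d D"
    by (rule lip_variance_bound_uniform[OF c]) (rule that)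
  define \<sigma>\<^sub>0 where "\<sigma>\<^sub>0 = (4 * sqrt D + 4 * quarter_radius c)\<^sup>2"
  have "0 < 4 * sqrt D + 4 * quarter_radius c"
    using D(1) quarter_radius_pos[OF c] by (simp add: add_nonneg_pos)
  then have \<sigma>\<^sub>0_pos: "0 < \<sigma>\<^sub>0" by (simp add: \<sigma>\<^sub>0_def)
  have A: "(0::real) \<le> 4" and q: "0 \<le> exp (- c * \<sigma>\<^sub>0 / 16)" "exp (- c * \<sigma>\<^sub>0 / 16) < 1"
    using c \<sigma>\<^sub>0_pos by simp_all
  obtain K where K: "0 < K"
    "\<And>M (X :: (nat \<Rightarrow> real) \<Rightarrow> real) a h. prob_space M \<Longrightarrow> X \<in> borel_measurable M \<Longrightarrow> 0 < h \<Longrightarrow>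
       \<forall>k::nat. measure M {x\<in>space M. \<bar>X x - a\<bar> > real k * h} \<le> 4 * exp (- c * \<sigma>\<^sub>0 / 16) ^ k \<Longrightarrow>
       psi1_norm M (\<lambda>x. X x - (\<integral>y. X y \<partial>M)) \<le> ereal (K * h)"
    by (rule psi1_norm_centered_le_of_geometric_tail[OF A q]) (rule that)
  show ?thesis
  proof (rule that[of "K * \<sigma>\<^sub>0"])
    show "0 < K * \<sigma>\<^sub>0" using K(1) \<sigma>\<^sub>0_pos by simp
    fix M d m n u v U c1 c2 b
    assume M: "lip_concentration_space M c d"
      and u: "c1 \<in> lip_consts d m u" and v: "c2 \<in> lip_consts d n v"
      and u_centered: "\<forall>i<m. (\<integral>x. u x i \<partial>M) = 0" and v_centered: "\<forall>j<n. (\<integral>x. v x j \<partial>M) = 0"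
      and b: "0 < b" and b_bound: "c1 * c2 * frob m n U \<le> b"
    interpret lip_variance_bound M c d D by (rule D(2)[OF M])
    obtain a where tail: "\<forall>k::nat. prob {x\<in>space M. \<bar>bilin m n U (u x) (v x) - a\<bar> > real k * (\<sigma>\<^sub>0 * b)}
        \<le> 4 * exp (- c * \<sigma>\<^sub>0 / 16) ^ k"
      using bilin_geometric_tail[OF u v u_centered v_centered b b_bound] unfolding \<sigma>\<^sub>0_def by blast
    have "(\<lambda>x. bilin m n U (u x) (v x)) \<in> borel_measurable M"
      using lipschitz_measurable[OF lipschitz_Rn_coordinate[OF u]]
        lipschitz_measurable[OF lipschitz_Rn_coordinate[OF v]]
      by (intro bilin_measurable) auto
    from K(2)[OF prob_space_axioms this _ tail]
    show "psi1_norm M (\<lambda>x. bilin m n U (u x) (v x) - expectation (\<lambda>y. bilin m n U (u y) (v y)))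
        \<le> ereal (K * \<sigma>\<^sub>0 * b)"
      using \<sigma>\<^sub>0_pos b by (simp add: mult.assoc)
  qed
qed

lemma bilin_psi1_norm_le_lipnorm:
  assumes c: "0 < c"
  obtains C where "0 < C"
    "\<And>M d m n u v U. lip_concentration_space M c d \<Longrightarrow> is_lip d m u \<Longrightarrow> is_lip d n v \<Longrightarrow>
       \<forall>i<m. (\<integral>x. u x i \<partial>M) = 0 \<Longrightarrow> \<forall>j<n. (\<integral>x. v x j \<partial>M) = 0 \<Longrightarrow>
       psi1_norm M (\<lambda>x. bilin m n U (u x) (v x) - (\<integral>y. bilin m n U (u y) (v y) \<partial>M))
         \<le> ereal (C * (lipnorm d m u * lipnorm d n v * frob m n U))"
proof -
  obtain C where C: "0 < C"
    "\<And>M d m n u v U c1 c2 b. lip_concentration_space M c d \<Longrightarrow>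
       c1 \<in> lip_consts d m u \<Longrightarrow> c2 \<in> lip_consts d n v \<Longrightarrow>
       \<forall>i<m. (\<integral>x. u x i \<partial>M) = 0 \<Longrightarrow> \<forall>j<n. (\<integral>x. v x j \<partial>M) = 0 \<Longrightarrow>
       0 < b \<Longrightarrow> c1 * c2 * frob m n U \<le> b \<Longrightarrow>
       psi1_norm M (\<lambda>x. bilin m n U (u x) (v x) - (\<integral>y. bilin m n U (u y) (v y) \<partial>M)) \<le> ereal (C * b)"
    by (rule bilin_psi1_norm_le[OF c]) (rule that)
  show ?thesis
  proof (rule that[OF C(1)])
    fix M d m n u v U
    assume M: "lip_concentration_space M c d" and "is_lip d m u" "is_lip d n v"
      and u_centered: "\<forall>i<m. (\<integral>x. u x i \<partial>M) = 0" and v_centered: "\<forall>j<n. (\<integral>x. v x j \<partial>M) = 0"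
    then have u: "lipnorm d m u \<in> lip_consts d m u" and v: "lipnorm d n v \<in> lip_consts d n v"
      by (simp_all add: lipnorm_in_lip_consts)
    define B where "B = lipnorm d m u * lipnorm d n v * frob m n U"
    have "0 \<le> B"
      using lip_consts_nonneg[OF u] lip_consts_nonneg[OF v] frob_nonneg by (simp add: B_def)
    have "psi1_norm M (\<lambda>x. bilin m n U (u x) (v x) - (\<integral>y. bilin m n U (u y) (v y) \<partial>M))
        \<le> ereal (C * B) + ereal e" if "0 < e" for e
    proof -
      have "psi1_norm M (\<lambda>x. bilin m n U (u x) (v x) - (\<integral>y. bilin m n U (u y) (v y) \<partial>M))
          \<le> ereal (C * (B + e / C))"
        using C(2)[OF M u v u_centered v_centered] \<open>0 \<le> B\<close> that C(1) by (simp add: B_def add_nonneg_pos)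
      then show ?thesis using C(1) by (simp add: distrib_left)
    qed
    then show "psi1_norm M (\<lambda>x. bilin m n U (u x) (v x) - (\<integral>y. bilin m n U (u y) (v y) \<partial>M))
        \<le> ereal (C * (lipnorm d m u * lipnorm d n v * frob m n U))"
      unfolding B_def by (rule ereal_le_epsilon2)
  qed
qed

lemma lip_concentration_space_PiM:
  assumes "prob_space M" "sets M = sets (PiM {..<d} (\<lambda>_. lborel))" "lip_concentration c d M" "0 < c"
  shows "lip_concentration_space M c d"
proof -
  have "space M = space (PiM {..<d} (\<lambda>_. lborel))" using assms(2) by (rule sets_eq_imp_space_eq)
  then show ?thesis
    using assms by (simp add: lip_concentration_space_def lip_concentration_space_axioms_def space_PiM Rn_def)
qed

lemma mult_le_sqrt_sum_squares_power2:
  fixes x y :: real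
  assumes "0 \<le> x" "0 \<le> y"
  shows "x * y \<le> (sqrt (x\<^sup>2 + y\<^sup>2))\<^sup>2"
  using sum_squares_bound[of x y] mult_nonneg_nonneg[OF assms] by simp

theorem lemma5:
  fixes c :: real
  assumes "c > 0"
  shows "\<exists>C>0. \<forall>(d::nat) (du::nat) (dv::nat) (M::(nat \<Rightarrow> real) measure)
            (u::(nat \<Rightarrow> real) \<Rightarrow> nat \<Rightarrow> real) (v::(nat \<Rightarrow> real) \<Rightarrow> nat \<Rightarrow> real)
            (U::nat \<Rightarrow> nat \<Rightarrow> real).
     prob_space M \<and> sets M = sets (PiM {..<d} (\<lambda>_. lborel)) \<and>
     lip_concentration c d M \<and>
     is_lip d du u \<and> is_lip d dv v \<and>
     (\<forall>i<du. (\<integral>x. u x i \<partial>M) = 0) \<and> (\<forall>j<dv. (\<integral>x. v x j \<partial>M) = 0)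
     \<longrightarrow> psi1_norm M (\<lambda>x. bilin du dv U (u x) (v x) - (\<integral>y. bilin du dv U (u y) (v y) \<partial>M))
         \<le> ereal (C * (sqrt ((lipnorm d du u)\<^sup>2 + (lipnorm d dv v)\<^sup>2))\<^sup>2 * frob du dv U)"
proof -
  obtain C where C: "0 < C"
    "\<And>M d m n u v U. lip_concentration_space M c d \<Longrightarrow> is_lip d m u \<Longrightarrow> is_lip d n v \<Longrightarrow>
       \<forall>i<m. (\<integral>x. u x i \<partial>M) = 0 \<Longrightarrow> \<forall>j<n. (\<integral>x. v x j \<partial>M) = 0 \<Longrightarrow>
       psi1_norm M (\<lambda>x. bilin m n U (u x) (v x) - (\<integral>y. bilin m n U (u y) (v y) \<partial>M))
         \<le> ereal (C * (lipnorm d m u * lipnorm d n v * frob m n U))"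
    by (rule bilin_psi1_norm_le_lipnorm[OF assms]) (rule that)
  show ?thesis
  proof (intro exI[of _ C] conjI allI impI)
    fix d du dv M u v U
    assume H: "prob_space M \<and> sets M = sets (PiM {..<d} (\<lambda>_. lborel)) \<and> lip_concentration c d M \<and>
      is_lip d du u \<and> is_lip d dv v \<and> (\<forall>i<du. (\<integral>x. u x i \<partial>M) = 0) \<and> (\<forall>j<dv. (\<integral>x. v x j \<partial>M) = 0)"
    then have "lip_concentration_space M c d" using assms by (intro lip_concentration_space_PiM) auto
    have "lipnorm d du u * lipnorm d dv v * frob du dv U
        \<le> (sqrt ((lipnorm d du u)\<^sup>2 + (lipnorm d dv v)\<^sup>2))\<^sup>2 * frob du dv U"
      using H frob_nonneg by (intro mult_right_mono mult_le_sqrt_sum_squares_power2 lipnorm_nonneg) auto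
    then have bound: "C * (lipnorm d du u * lipnorm d dv v * frob du dv U)
        \<le> C * (sqrt ((lipnorm d du u)\<^sup>2 + (lipnorm d dv v)\<^sup>2))\<^sup>2 * frob du dv U"
      using C(1) by (simp add: mult.assoc)
    have "psi1_norm M (\<lambda>x. bilin du dv U (u x) (v x) - (\<integral>y. bilin du dv U (u y) (v y) \<partial>M))
        \<le> ereal (C * (lipnorm d du u * lipnorm d dv v * frob du dv U))"
      using \<open>lip_concentration_space M c d\<close> H by (intro C(2)) auto
    also have "\<dots> \<le> ereal (C * (sqrt ((lipnorm d du u)\<^sup>2 + (lipnorm d dv v)\<^sup>2))\<^sup>2 * frob du dv U)"
      using bound by simp
    finally show "psi1_norm M (\<lambda>x. bilin du dv U (u x) (v x) - (\<integral>y. bilin du dv U (u y) (v y) \<partial>M))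
        \<le> ereal (C * (sqrt ((lipnorm d du u)\<^sup>2 + (lipnorm d dv v)\<^sup>2))\<^sup>2 * frob du dv U)" .
  qed (use C(1) in simp)
qed

end
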